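(* Let $p\in(0,+\infty]$ and $f\in H^p(\mathbb{B})$. Then the regular conjugate $f^c$ belongs to $H^p(\mathbb{B})$.
   Context: $\mathbb{H}$ denotes the quaternions; $\mathbb{S}=\{q\in\mathbb{H}: q^2=-1\}$; for $I\in\mathbb{S}$, $L_I=\mathbb{R}+\mathbb{R}I$; $\mathbb{B}=\{q\in\mathbb{H}:|q|<1\}$; $\mathbb{B}_I=\mathbb{B}\cap L_I$; $e^{I\theta}=\cos\theta+I\sin\theta$. A function $f:\mathbb{B}\to\mathbb{H}$ is (slice) regular if for every $I\in\mathbb{S}$ its restriction $f_I=f|_{\mathbb{B}_I}$ has continuous partial derivatives and satisfies $\frac12(\partial_x+I\partial_y)f_I(x+yI)=0$ on $\mathbb{B}_I$; equivalently, $f(q)=\sum_{n\ge0}q^na_n$ with $a_n\in\mathbb{H}$, convergent on $\mathbb{B}$. The regular conjugate of $f=\sum q^na_n$ is $f^c(q)=\sum_{n\ge0}q^n\overline{a_n}$. Hardy norms: for $p\in(0,\infty)$, $M_p(f_I,r)=\left(\frac{1}{2\pi}\int_{-\pi}^{\pi}|f(re^{I\theta})|^pd\theta\right)^{1/p}$, $\|f_I\|_p=\lim_{r\to1^-}M_p(f_I,r)$, $\|f\|_p=\sup_{I\in\mathbb{S}}\|f_I\|_p$; $\|f\|_\infty=\sup_{q\in\mathbb{B}}|f(q)|$. $H^p(\mathbb{B})=\{f\text{ regular}: \|f\|_p<+\infty\}$. *)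

theory Defs
  imports "HOL-Analysis.Analysis"
begin

text \<open>Quaternions via the Cayley--Dickson construction: q = a + b j with a, b complex
  (a = x0 + x1 i, b = x2 + x3 i, so q = x0 + x1 i + x2 j + x3 k).
  The product-type norm sqrt(|a|^2+|b|^2) is the Euclidean norm |q|, and the
  product topology is the usual topology of H = R^4.\<close>

type_synonym quat = "complex \<times> complex"

definition qmult :: "quat \<Rightarrow> quat \<Rightarrow> quat" where
  "qmult p q = (fst p * fst q - cnj (snd q) * snd p, snd q * fst p + snd p * cnj (fst q))"

definition qone :: quat where "qone = (1, 0)"

fun qpow :: "quat \<Rightarrow> nat \<Rightarrow> quat" where
  "qpow q 0 = qone"
| "qpow q (Suc n) = qmult (qpow q n) q"

definition qconj :: "quat \<Rightarrow> quat" where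
  "qconj q = (cnj (fst q), - snd q)"

definition qS :: "quat set" where
  "qS = {q. qmult q q = - qone}"

definition qB :: "quat set" where
  "qB = {q. norm q < 1}"

definition qexpI :: "quat \<Rightarrow> real \<Rightarrow> quat" where
  "qexpI I \<theta> = cos \<theta> *\<^sub>R qone + sin \<theta> *\<^sub>R I"

definition has_coeffs :: "(quat \<Rightarrow> quat) \<Rightarrow> (nat \<Rightarrow> quat) \<Rightarrow> bool" where
  "has_coeffs f a \<longleftrightarrow> (\<forall>q\<in>qB. (\<lambda>n. qmult (qpow q n) (a n)) sums f q)"

text \<open>Slice regular functions on B (power series characterisation).\<close>
definition slice_regular :: "(quat \<Rightarrow> quat) \<Rightarrow> bool" where
  "slice_regular f \<longleftrightarrow> (\<exists>a. has_coeffs f a)"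

text \<open>Regular conjugate f^c(q) = sum q^n conj(a_n), where f = sum q^n a_n
  (the coefficients are uniquely determined by f).\<close>
definition regular_conj :: "(quat \<Rightarrow> quat) \<Rightarrow> quat \<Rightarrow> quat" where
  "regular_conj f = (let a = (SOME a. has_coeffs f a) in
     (\<lambda>q. \<Sum>n. qmult (qpow q n) (qconj (a n))))"

definition Mp :: "real \<Rightarrow> (quat \<Rightarrow> quat) \<Rightarrow> quat \<Rightarrow> real \<Rightarrow> real" where
  "Mp p f I r = ((1 / (2 * pi)) *
      (LBINT \<theta>=-pi..pi. norm (f (r *\<^sub>R qexpI I \<theta>)) powr p)) powr (1 / p)"

definition hardy_norm :: "ereal \<Rightarrow> (quat \<Rightarrow> quat) \<Rightarrow> ereal" where
  "hardy_norm p f =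
     (if p = \<infinity> then (SUP q\<in>qB. ereal (norm (f q)))
      else (SUP I\<in>qS. Lim (at_left (1::real)) (\<lambda>r. ereal (Mp (real_of_ereal p) f I r))))"

definition hardy_space :: "ereal \<Rightarrow> (quat \<Rightarrow> quat) set" where
  "hardy_space p = {f. slice_regular f \<and> hardy_norm p f < \<infinity>}"

end

theory Submission
  imports Defs "HOL-Complex_Analysis.Complex_Analysis"
begin

(*
  Fix an imaginary unit I.  An inner automorphism x |-> u x u^{-1} of H
  (|u| = 1) maps the slice L_I onto the complex plane C = L_i and preserves norms,
  and in the splitting H = C + C j a regular function f = sum q^n a_n becomes
  f(z) = (F z, G z) with F, G holomorphic on the unit disc, while
  f^c(z) = (conj (F (conj z)), - G z).  Hence pointwise on the slice
  |f^c(z)|^2 = |F(conj z)|^2 + |G z|^2, which is dominated by |f(conj z)|^2 + |f(z)|^2.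

  For p = infinity this gives sup |f^c| <= 2 sup |f|.  For finite p the integral means
  M_p(f_I, r) are circle means of (|F|^2 + |G|^2)^{p/2}; this function is subharmonic
  (it is a limit of the subharmonic functions (|F|^2 + |G|^2 + eps)^{p/2}, each of which
  locally dominates the real part of a holomorphic function with equal value at the
  centre), so its circle means increase with the radius.  Therefore the limits defining
  the Hardy norms exist, and the pointwise bound gives
  M_p(f^c_I, r) <= C_p M_p(f_I, r), whence ||f^c||_p <= C_p ||f||_p.
*)

section \<open>Quaternion algebra\<close>

lemma qmult_simps [simp]:
  "fst (qmult p q) = fst p * fst q - cnj (snd q) * snd p"
  "snd (qmult p q) = snd q * fst p + snd p * cnj (fst q)"
  by (simp_all add: qmult_def)

lemma qmult_assoc: "qmult (qmult x y) z = qmult x (qmult y z)"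
  by (simp add: prod_eq_iff algebra_simps)

lemma qmult_one [simp]: "qmult qone x = x" "qmult x qone = x"
  by (simp_all add: prod_eq_iff qone_def)

lemma qmult_scaleR [simp]:
  "qmult (c *\<^sub>R x) y = c *\<^sub>R qmult x y" "qmult x (c *\<^sub>R y) = c *\<^sub>R qmult x y"
  by (simp_all add: prod_eq_iff algebra_simps scaleR_conv_of_real)

lemma qmult_add [simp]:
  "qmult (x + y) z = qmult x z + qmult y z" "qmult x (y + z) = qmult x y + qmult x z"
  by (simp_all add: prod_eq_iff algebra_simps)

lemma qconj_simps [simp]: "fst (qconj x) = cnj (fst x)" "snd (qconj x) = - snd x"
  by (simp_all add: qconj_def)

lemma qconj_qconj [simp]: "qconj (qconj x) = x"
  by (simp add: prod_eq_iff)

lemma qconj_mult: "qconj (qmult x y) = qmult (qconj y) (qconj x)"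
  by (simp add: prod_eq_iff algebra_simps)

lemma qconj_scaleR [simp]: "qconj (c *\<^sub>R x) = c *\<^sub>R qconj x"
  by (simp add: prod_eq_iff scaleR_conv_of_real)

lemma norm_qconj [simp]: "norm (qconj x) = norm x"
  by (cases x) (simp add: qconj_def norm_Pair)

lemma quat_norm_square:
  "norm (x::quat) * norm x = Re (fst x) * Re (fst x) + Im (fst x) * Im (fst x)
                            + Re (snd x) * Re (snd x) + Im (snd x) * Im (snd x)"
proof -
  have "(norm x)^2 = (cmod (fst x))^2 + (cmod (snd x))^2"
    by (cases x) (simp add: norm_Pair)
  then show ?thesis by (metis cmod_power2 power2_eq_square add.assoc)
qed

lemma qmult_conj_self: "qmult x (qconj x) = (norm x)^2 *\<^sub>R qone"
  and qmult_conj_self': "qmult (qconj x) x = (norm x)^2 *\<^sub>R qone"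
  by (simp_all add: prod_eq_iff qone_def complex_eq_iff power2_eq_square
                    quat_norm_square algebra_simps)

lemma norm_qmult: "norm (qmult x y) = norm x * norm y"
proof -
  have "norm (qmult x y) * norm (qmult x y) = (norm x * norm x) * (norm y * norm y)"
    unfolding quat_norm_square by (simp add: algebra_simps)
  then have "(norm (qmult x y))^2 = (norm x * norm y)^2"
    by (simp add: power2_eq_square algebra_simps)
  then show ?thesis by (simp add: power2_eq_iff_nonneg)
qed

lemma bounded_linear_qmult_left: "bounded_linear (\<lambda>x. qmult a x)"
  by (rule bounded_linear_intro[where K="norm a"]) (auto simp: norm_qmult)

lemma bounded_linear_qmult_right: "bounded_linear (\<lambda>x. qmult x a)"
  by (rule bounded_linear_intro[where K="norm a"]) (auto simp: norm_qmult mult.commute)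

section \<open>Rotations of H\<close>

definition qrot :: "quat \<Rightarrow> quat \<Rightarrow> quat" where
  "qrot u x = qmult (qmult u x) (qconj u)"

lemma qrot_linear [simp]:
  "qrot u (c *\<^sub>R x) = c *\<^sub>R qrot u x" "qrot u (x + y) = qrot u x + qrot u y"
  by (simp_all add: qrot_def)

lemma bounded_linear_qrot: "bounded_linear (qrot u)"
  unfolding qrot_def
  using bounded_linear_compose[OF bounded_linear_qmult_right bounded_linear_qmult_left] by blast

lemma unit_qmult_conj:
  "norm u = 1 \<Longrightarrow> qmult (qconj u) u = qone" "norm u = 1 \<Longrightarrow> qmult u (qconj u) = qone"
  by (simp_all add: qmult_conj_self qmult_conj_self')

lemma qrot_mult: "norm u = 1 \<Longrightarrow> qrot u (qmult x y) = qmult (qrot u x) (qrot u y)"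
  by (simp add: qrot_def qmult_assoc)
     (simp add: qmult_assoc[symmetric] unit_qmult_conj)

lemma qrot_one: "norm u = 1 \<Longrightarrow> qrot u qone = qone"
  by (simp add: qrot_def unit_qmult_conj)

lemma qrot_pow: "norm u = 1 \<Longrightarrow> qrot u (qpow x n) = qpow (qrot u x) n"
  by (induction n) (simp_all add: qrot_one qrot_mult)

lemma qrot_conj: "qrot u (qconj x) = qconj (qrot u x)"
  by (simp add: qrot_def qconj_mult qmult_assoc)

lemma norm_qrot: "norm u = 1 \<Longrightarrow> norm (qrot u x) = norm x"
  by (simp add: qrot_def norm_qmult)

lemma qrot_inverse: "norm u = 1 \<Longrightarrow> qrot (qconj u) (qrot u x) = x"
  by (simp add: qrot_def qmult_assoc unit_qmult_conj)
     (simp add: qmult_assoc[symmetric] unit_qmult_conj)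

lemma qrot_inverse': "norm u = 1 \<Longrightarrow> qrot u (qrot (qconj u) x) = x"
  using qrot_inverse[of "qconj u" x] by simp

definition qi :: quat where "qi = (\<i>, 0)"

text \<open>Every purely imaginary unit quaternion can be rotated onto i.  For I \<noteq> -i the
  rotation by the normalisation of i + I does it, since (i + I) I = i (i + I).\<close>

lemma pure_unit_rotate_to_i:
  assumes "Re (fst I) = 0" "norm I = 1"
  shows "\<exists>u. norm u = 1 \<and> qrot u I = qi"
proof (cases "I = - qi")
  case True
  have "qrot (0, 1) I = qi" "norm ((0, 1) :: quat) = 1"
    using True by (simp_all add: qrot_def qi_def prod_eq_iff norm_Pair)
  then show ?thesis by blast
next
  case False
  define v where "v = qi + I"
  have comm: "qmult v I = qmult qi v"
    using assms quat_norm_square[of I]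
    by (simp add: v_def qi_def prod_eq_iff complex_eq_iff algebra_simps)
  have pos: "norm v > 0"
    using False unfolding v_def by (metis add.commute add_eq_0_iff zero_less_norm_iff)
  define u where "u = (1 / norm v) *\<^sub>R v"
  have "qrot u I = (1 / norm v)^2 *\<^sub>R qmult qi (qmult v (qconj v))"
    by (simp add: u_def qrot_def power2_eq_square comm qmult_assoc[symmetric])
  also have "\<dots> = qi" using pos by (simp add: qmult_conj_self field_simps)
  finally show ?thesis using pos by (intro exI[of _ u]) (simp add: u_def)
qed

lemma qS_pure_unit:
  assumes "I \<in> qS" shows "Re (fst I) = 0" "norm I = 1"
proof -
  obtain a b where I: "I = (a, b)" by (cases I)
  have e1: "a * a - cnj b * b = -1" and e2: "b * (a + cnj a) = 0"
    using assms by (auto simp: qS_def I qmult_def qone_def algebra_simps)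
  have "Re a = 0"
  proof (cases "b = 0")
    case True
    then have sq: "Re a * Re a - Im a * Im a = -1" and "Re a * Im a = 0"
      using arg_cong[OF e1, of Re] arg_cong[OF e1, of Im] by (simp_all add: algebra_simps)
    show ?thesis
    proof (rule ccontr)
      assume "Re a \<noteq> 0"
      then have "Re a * Re a = -1" using sq \<open>Re a * Im a = 0\<close> by simp
      then show False by (metis not_square_less_zero neg_less_0_iff_less zero_less_one)
    qed
  next
    case False
    then have "a + cnj a = 0" using e2 by simp
    then show ?thesis by (simp add: complex_eq_iff)
  qed
  then show "Re (fst I) = 0" using I by simp
  have "Im a * Im a + Re b * Re b + Im b * Im b = 1"
    using arg_cong[OF e1, of Re] \<open>Re a = 0\<close> by (simp add: algebra_simps)
  then have "norm I * norm I = 1" using \<open>Re a = 0\<close> I quat_norm_square[of I] by simp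
  then have "(norm I - 1) * (norm I + 1) = 0" by (simp add: algebra_simps)
  moreover have "norm I + 1 > 0" by (simp add: add_nonneg_pos)
  ultimately show "norm I = 1" by simp
qed

section \<open>Splitting a regular function along a slice\<close>

definition conj_series :: "(nat \<Rightarrow> quat) \<Rightarrow> quat \<Rightarrow> quat" where
  "conj_series a q = (\<Sum>n. qmult (qpow q n) (qconj (a n)))"

lemma sums_Pair: "x sums a \<Longrightarrow> y sums b \<Longrightarrow> (\<lambda>n. (x n, y n)) sums (a, b)"
proof -
  assume "x sums a" "y sums b"
  then have "(\<lambda>n. ((\<Sum>i<n. x i), (\<Sum>i<n. y i))) \<longlonglongrightarrow> (a, b)"
    unfolding sums_def by (intro tendsto_Pair)
  moreover have "(\<Sum>i<n. (x i, y i)) = ((\<Sum>i<n. x i), (\<Sum>i<n. y i))" for n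
    by (simp add: prod_eq_iff fst_sum snd_sum)
  ultimately show ?thesis unfolding sums_def by simp
qed

lemma qpow_complex: "qpow (w, 0) n = (w ^ n, 0)"
  by (induction n) (simp_all add: qone_def prod_eq_iff)

text \<open>Every quaternion is the image of a complex number of the same modulus under a
  rotation: write q = x + v with v imaginary and rotate v / |v| onto i.\<close>

lemma rotate_from_complex:
  "\<exists>u w. norm u = 1 \<and> q = qrot (qconj u) (w, 0) \<and> cmod w = norm q"
proof -
  have "\<exists>u w. norm u = 1 \<and> qrot u q = (w, 0)"
  proof -
    obtain c d where q: "q = (c, d)" by (cases q)
    define v :: quat where "v = (\<i> * of_real (Im c), d)"
    have qv: "q = Re c *\<^sub>R qone + v"
      by (simp add: q v_def qone_def prod_eq_iff complex_eq_iff)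
    show ?thesis
    proof (cases "v = 0")
      case True
      then have "qrot qone q = (c, 0)" "norm qone = 1"
        using qv by (simp_all add: q v_def qrot_def qone_def prod_eq_iff complex_eq_iff norm_Pair)
      then show ?thesis by blast
    next
      case False
      then have pos: "norm v > 0" by simp
      define I where "I = (1 / norm v) *\<^sub>R v"
      have "Re (fst I) = 0" by (simp add: I_def v_def)
      moreover have "norm I = 1" using pos by (simp add: I_def)
      ultimately obtain u where u: "norm u = 1" "qrot u I = qi" using pure_unit_rotate_to_i by blast
      have vI: "v = norm v *\<^sub>R I" using pos by (simp add: I_def)
      have "qrot u q = Re c *\<^sub>R qrot u qone + norm v *\<^sub>R qrot u I"
        by (subst qv, subst vI) simp
      also have "\<dots> = (of_real (Re c) + \<i> * of_real (norm v), 0)"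
        using u by (simp add: qrot_one) (simp add: qone_def qi_def prod_eq_iff scaleR_conv_of_real)
      finally show ?thesis using u by blast
    qed
  qed
  then obtain u w where uw: "norm u = 1" "qrot u q = (w, 0)" by blast
  have "q = qrot (qconj u) (w, 0)" using qrot_inverse[OF uw(1), of q] uw(2) by simp
  moreover have "cmod w = norm q" using norm_qrot[OF uw(1), of q] uw(2) by (simp add: norm_Pair)
  ultimately show ?thesis using uw(1) by blast
qed

lemma slice_rotate_from_complex:
  assumes "I \<in> qS"
  shows "\<exists>u. norm u = 1 \<and> (\<forall>r \<theta>. r *\<^sub>R qexpI I \<theta> = qrot (qconj u) (of_real r * cis \<theta>, 0))"
proof -
  obtain u where u: "norm u = 1" "qrot u I = qi"
    using pure_unit_rotate_to_i qS_pure_unit[OF assms] by blast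
  have I: "qrot (qconj u) qi = I" using qrot_inverse[OF u(1), of I] u(2) by simp
  have "(of_real r * cis \<theta>, 0) = r *\<^sub>R (cos \<theta> *\<^sub>R qone + sin \<theta> *\<^sub>R qi)" for r \<theta>
    by (simp add: qone_def qi_def prod_eq_iff complex_eq_iff)
  then have "qrot (qconj u) (of_real r * cis \<theta>, 0) = r *\<^sub>R qexpI I \<theta>" for r \<theta>
    using qrot_one[of "qconj u"] u(1) I by (simp add: qexpI_def)
  then show ?thesis using u by metis
qed

text \<open>After rotating by u, the coefficients split
  as (alpha_n, beta_n) in C + C j and on the rotated complex plane
  f = (F, G) with F = sum alpha_n w^n and G = sum beta_n w^n holomorphic, while
  f^c = (Fc, -G) with Fc = sum conj(alpha_n) w^n, i.e. Fc(w) = conj (F (conj w)).\<close>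

locale slice_splitting =
  fixes f :: "quat \<Rightarrow> quat" and a :: "nat \<Rightarrow> quat" and u :: quat
  assumes coeffs: "has_coeffs f a" and unit: "norm u = 1"
begin

definition alpha where "alpha n = fst (qrot u (a n))"
definition beta where "beta n = snd (qrot u (a n))"
definition F where "F w = (\<Sum>n. alpha n * w ^ n)"
definition G where "G w = (\<Sum>n. beta n * w ^ n)"
definition Fc where "Fc w = (\<Sum>n. cnj (alpha n) * w ^ n)"
definition slice_pt where "slice_pt w = qrot (qconj u) (w, 0)"

lemma norm_slice_pt: "norm (slice_pt w) = cmod w"
  using unit by (simp add: slice_pt_def norm_qrot norm_Pair)

lemma qrot_term:
  "qrot u (qmult (qpow (slice_pt w) n) b) = (w ^ n * fst (qrot u b), snd (qrot u b) * w ^ n)"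
  using unit by (simp add: slice_pt_def qrot_mult qrot_pow qrot_inverse' qpow_complex prod_eq_iff)

lemma F_G_sums:
  assumes "cmod w < 1"
  shows "(\<lambda>n. alpha n * w ^ n) sums F w" "(\<lambda>n. beta n * w ^ n) sums G w"
    and "qrot u (f (slice_pt w)) = (F w, G w)"
proof -
  have "slice_pt w \<in> qB" using assms by (simp add: qB_def norm_slice_pt)
  then have "(\<lambda>n. qmult (qpow (slice_pt w) n) (a n)) sums f (slice_pt w)"
    using coeffs by (simp add: has_coeffs_def)
  from bounded_linear.sums[OF bounded_linear_qrot this, of u]
  have S: "(\<lambda>n. (w ^ n * alpha n, beta n * w ^ n)) sums qrot u (f (slice_pt w))"
    by (simp add: qrot_term alpha_def beta_def)
  from bounded_linear.sums[OF bounded_linear_fst S]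
  have s1: "(\<lambda>n. alpha n * w ^ n) sums fst (qrot u (f (slice_pt w)))"
    by (simp add: mult.commute)
  from bounded_linear.sums[OF bounded_linear_snd S]
  have s2: "(\<lambda>n. beta n * w ^ n) sums snd (qrot u (f (slice_pt w)))"
    by simp
  show "(\<lambda>n. alpha n * w ^ n) sums F w" using s1 by (simp add: F_def sums_iff)
  show "(\<lambda>n. beta n * w ^ n) sums G w" using s2 by (simp add: G_def sums_iff)
  show "qrot u (f (slice_pt w)) = (F w, G w)"
    using s1 s2 by (simp add: F_def G_def sums_iff prod_eq_iff)
qed

lemma Fc_sums: "cmod w < 1 \<Longrightarrow> (\<lambda>n. cnj (alpha n) * w ^ n) sums cnj (F (cnj w))"
  using F_G_sums(1)[of "cnj w"] by (subst sums_cnj[symmetric]) simp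

lemma Fc_eq: "cmod w < 1 \<Longrightarrow> Fc w = cnj (F (cnj w))"
  using Fc_sums by (simp add: Fc_def sums_iff)

lemma holomorphic_F: "F holomorphic_on ball 0 1"
  by (rule power_series_holomorphic[where a=alpha]) (use F_G_sums(1) in auto)

lemma holomorphic_G: "G holomorphic_on ball 0 1"
  by (rule power_series_holomorphic[where a=beta]) (use F_G_sums(2) in auto)

lemma holomorphic_Fc: "Fc holomorphic_on ball 0 1"
  by (rule power_series_holomorphic[where a="\<lambda>n. cnj (alpha n)"])
     (use Fc_sums Fc_eq in auto)

lemma norm_f_slice: "cmod w < 1 \<Longrightarrow> norm (f (slice_pt w)) = norm (F w, G w)"
  using F_G_sums(3)[of w] unit by (metis norm_qrot)

lemma conj_series_sums:
  assumes "cmod w < 1"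
  shows "(\<lambda>n. qmult (qpow (slice_pt w) n) (qconj (a n))) sums qrot (qconj u) (Fc w, - G w)"
proof -
  have S: "(\<lambda>n. (w ^ n * cnj (alpha n), - (beta n * w ^ n))) sums (Fc w, - G w)"
    using sums_Pair[OF Fc_sums[OF assms] sums_minus[OF F_G_sums(2)[OF assms]]]
    by (simp add: Fc_eq[OF assms] mult.commute)
  have "qmult (qpow (slice_pt w) n) (qconj (a n))
          = qrot (qconj u) (w ^ n * cnj (alpha n), - (beta n * w ^ n))" for n
  proof -
    have "qrot u (qmult (qpow (slice_pt w) n) (qconj (a n)))
            = (w ^ n * cnj (alpha n), - (beta n * w ^ n))"
      by (simp add: qrot_term qrot_conj alpha_def beta_def)
    then show ?thesis using unit by (metis qrot_inverse)
  qed
  then show ?thesis using bounded_linear.sums[OF bounded_linear_qrot S] by simp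
qed

lemma norm_conj_series_slice:
  "cmod w < 1 \<Longrightarrow> norm (conj_series a (slice_pt w)) = norm (Fc w, G w)"
  using conj_series_sums[of w] unit
  by (simp add: conj_series_def sums_iff norm_qrot norm_Pair)

end

section \<open>Circle integrals and the sub-mean-value property\<close>

definition circle_integral :: "(complex \<Rightarrow> real) \<Rightarrow> real \<Rightarrow> real" where
  "circle_integral u \<rho> = integral {-pi..pi} (\<lambda>t. u (of_real \<rho> * cis t))"

text \<open>u has the sub-mean-value property on small circles, locally uniformly in the unit
  disc; for continuous u this is subharmonicity.\<close>

definition disc_submean :: "(complex \<Rightarrow> real) \<Rightarrow> bool" where
  "disc_submean u \<longleftrightarrow> (\<forall>s<1. \<exists>\<delta>>0. \<forall>z c. cmod z \<le> s \<longrightarrow> cmod c < \<delta> \<longrightarrow>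
       2 * pi * u z \<le> integral {-pi..pi} (\<lambda>\<sigma>. u (z + c * cis \<sigma>)))"

lemma periodic_integral_shift:
  fixes g :: "real \<Rightarrow> real"
  assumes cont: "continuous_on UNIV g" and per: "\<And>x. g (x + 2 * pi) = g x"
    and \<alpha>: "\<bar>\<alpha>\<bar> \<le> 2 * pi"
  shows "integral {-pi..pi} (\<lambda>t. g (t + \<alpha>)) = integral {-pi..pi} g"
proof -
  have nonneg: "integral {-pi..pi} (\<lambda>t. h (t + \<beta>)) = integral {-pi..pi} h"
    if cont: "continuous_on UNIV h" and per: "\<And>x. h (x + 2 * pi) = h x"
      and \<beta>: "0 \<le> \<beta>" "\<beta> \<le> 2 * pi" for h :: "real \<Rightarrow> real" and \<beta>
  proof -
    have int: "\<And>a b. h integrable_on {a..b}"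
      using cont by (intro integrable_continuous_real) (auto intro: continuous_on_subset)
    have "integral {-pi..pi} (\<lambda>t. h (t + \<beta>)) = integral {-pi+\<beta>..pi+\<beta>} h"
      using integral_shift_Icc_real[of "-pi" pi h \<beta>] by (simp add: o_def add.commute)
    also have "\<dots> = integral {-pi+\<beta>..pi} h + integral {pi..pi+\<beta>} h"
      using Henstock_Kurzweil_Integration.integral_combine[OF _ _ int, of "-pi+\<beta>" pi "pi+\<beta>"] \<beta>
      by simp
    also have "integral {pi..pi+\<beta>} h = integral {-pi..-pi+\<beta>} h"
      using integral_shift_Icc_real[of "-pi" "-pi+\<beta>" h "2*pi"] by (simp add: o_def add.commute per)
    also have "integral {-pi+\<beta>..pi} h + integral {-pi..-pi+\<beta>} h = integral {-pi..pi} h"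
      using Henstock_Kurzweil_Integration.integral_combine[OF _ _ int, of "-pi" "-pi+\<beta>" pi] \<beta>
      by simp
    finally show ?thesis .
  qed
  show ?thesis
  proof (cases "0 \<le> \<alpha>")
    case True
    then show ?thesis using nonneg[OF cont per] \<alpha> by simp
  next
    case False
    have cont': "continuous_on UNIV (\<lambda>t. g (t + \<alpha>))"
      by (rule continuous_on_compose2[OF cont]) (auto intro!: continuous_intros)
    have "integral {-pi..pi} (\<lambda>t. g (t + - \<alpha> + \<alpha>)) = integral {-pi..pi} (\<lambda>t. g (t + \<alpha>))"
      using nonneg[OF cont', of "-\<alpha>"] per[of "_ + \<alpha>"] False \<alpha> by (simp add: algebra_simps)
    then show ?thesis by simp
  qed
qed

lemma cis_periodic: "cis (x + 2 * pi) = cis x"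
  by (simp add: complex_eq_iff)

lemma circle_integral_rotate:
  assumes cont: "continuous_on (ball 0 1) u" and z: "cmod z < 1"
  shows "integral {-pi..pi} (\<lambda>t. u (cis t * z)) = circle_integral u (cmod z)"
proof -
  define g where "g t = u (of_real (cmod z) * cis t)" for t
  have "continuous_on UNIV g" unfolding g_def
    by (rule continuous_on_compose2[OF cont]) (auto intro!: continuous_intros simp: norm_mult z)
  moreover have "g (x + 2 * pi) = g x" for x by (simp add: g_def cis_periodic)
  moreover have "\<bar>Arg z\<bar> \<le> 2 * pi" using Arg_bounded[of z] by auto
  ultimately have "integral {-pi..pi} (\<lambda>t. g (t + Arg z)) = integral {-pi..pi} g"
    by (rule periodic_integral_shift)
  moreover have "u (cis t * z) = g (t + Arg z)" for t
    using rcis_cmod_Arg[of z] by (simp add: g_def rcis_def cis_mult[symmetric] algebra_simps)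
  ultimately show ?thesis by (simp add: circle_integral_def g_def[abs_def])
qed

lemma circle_integral_continuous:
  assumes cont: "continuous_on (ball 0 1) u" and s: "s < 1"
  shows "continuous_on {0..s} (circle_integral u)"
proof -
  have "continuous_on ({0..s} \<times> cbox (-pi) pi) (\<lambda>p. of_real (fst p) * cis (snd p))"
    by (intro continuous_intros)
  moreover have "(\<lambda>p. of_real (fst p) * cis (snd p)) ` ({0..s} \<times> cbox (-pi) pi) \<subseteq> ball 0 1"
    using s by (auto simp: norm_mult)
  ultimately have "continuous_on ({0..s} \<times> cbox (-pi) pi) (\<lambda>(x, t). u (of_real x * cis t))"
    unfolding case_prod_beta by (rule continuous_on_compose2[OF cont])
  then have "continuous_on {0..s} (\<lambda>x. integral (cbox (-pi) pi) (\<lambda>t. u (of_real x * cis t)))"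
    by (rule integral_continuous_on_param)
  then show ?thesis by (simp add: circle_integral_def[abs_def])
qed

text \<open>Integrating the sub-mean-value inequality at the points of the circle of radius r
  over all rotations: the circle integral at radius r is dominated by the average of
  circle integrals at the radii |r + rho e^{i sigma}|.\<close>

lemma circle_integral_le_shifted:
  assumes cont: "continuous_on (ball 0 1) u"
    and sub: "\<And>z c. cmod z \<le> s \<Longrightarrow> cmod c < \<delta> \<Longrightarrow>
                2 * pi * u z \<le> integral {-pi..pi} (\<lambda>\<sigma>. u (z + c * cis \<sigma>))"
    and r: "0 \<le> r" and \<rho>: "0 < \<rho>" "\<rho> < \<delta>" "r + \<rho> \<le> s" and s: "s < 1"
  shows "2 * pi * circle_integral u r
           \<le> integral {-pi..pi} (\<lambda>\<sigma>. circle_integral u (cmod (of_real r + of_real \<rho> * cis \<sigma>)))"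
proof -
  define K where "K t \<sigma> = u (cis t * (of_real r + of_real \<rho> * cis \<sigma>))" for t \<sigma>
  have small: "cmod (of_real r + of_real \<rho> * cis \<sigma>) \<le> s" for \<sigma>
    using norm_triangle_ineq[of "of_real r" "of_real \<rho> * cis \<sigma> :: complex"] r \<rho>
    by (simp add: norm_mult)
  then have inside: "cmod (cis t * (of_real r + of_real \<rho> * cis \<sigma>)) < 1" for t \<sigma>
    using s by (simp add: norm_mult) (meson le_less_trans)
  have K_cont_square: "continuous_on (cbox (-pi, -pi) (pi, pi)) (\<lambda>(t, \<sigma>). K t \<sigma>)"
    unfolding K_def case_prod_beta
    by (rule continuous_on_compose2[OF cont]) (auto intro!: continuous_intros simp: inside)
  have K_swap: "integral {-pi..pi} (\<lambda>t. integral {-pi..pi} (K t))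
                   = integral {-pi..pi} (\<lambda>\<sigma>. integral {-pi..pi} (\<lambda>t. K t \<sigma>))"
    using integral_swap_continuous[OF K_cont_square] by simp
  have "continuous_on ({-pi..pi} \<times> cbox (-pi) pi) (\<lambda>(t, \<sigma>). K t \<sigma>)"
    using K_cont_square by (simp add: cbox_Pair_eq)
  then have inner_cont: "continuous_on {-pi..pi} (\<lambda>t. integral (cbox (-pi) pi) (K t))"
    by (rule integral_continuous_on_param)
  have pointwise: "2 * pi * u (of_real r * cis t) \<le> integral {-pi..pi} (K t)" for t
  proof -
    have "2 * pi * u (of_real r * cis t)
            \<le> integral {-pi..pi} (\<lambda>\<sigma>. u (of_real r * cis t + (of_real \<rho> * cis t) * cis \<sigma>))"
      using sub[of "of_real r * cis t" "of_real \<rho> * cis t"] r \<rho> by (simp add: norm_mult)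
    also have "\<dots> = integral {-pi..pi} (K t)"
      by (rule integral_cong) (simp add: K_def algebra_simps)
    finally show ?thesis .
  qed
  have u_cont: "continuous_on {-pi..pi} (\<lambda>t. 2 * pi * u (of_real r * cis t))"
    using r \<rho> s
    by (intro continuous_intros, rule_tac continuous_on_compose2[OF cont])
       (auto intro!: continuous_intros simp: norm_mult)
  have "2 * pi * circle_integral u r = integral {-pi..pi} (\<lambda>t. 2 * pi * u (of_real r * cis t))"
    by (simp add: circle_integral_def)
  also have "\<dots> \<le> integral {-pi..pi} (\<lambda>t. integral {-pi..pi} (K t))"
    using pointwise integrable_continuous_real[OF u_cont] integrable_continuous_real[OF inner_cont]
    by (intro integral_le) auto
  also have "\<dots> = integral {-pi..pi} (\<lambda>\<sigma>. circle_integral u (cmod (of_real r + of_real \<rho> * cis \<sigma>)))"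
    unfolding K_swap K_def using small s
    by (intro integral_cong circle_integral_rotate[OF cont]) (meson le_less_trans)
  finally show ?thesis .
qed

lemma integral_less_const:
  fixes g :: "real \<Rightarrow> real"
  assumes cont: "continuous_on {a..b} g" and ab: "a < b"
    and le: "\<And>x. x \<in> {a..b} \<Longrightarrow> g x \<le> m" and x0: "x0 \<in> {a..b}" "g x0 < m"
  shows "integral {a..b} g < (b - a) * m"
proof -
  have int: "g integrable_on {a..b}" using cont by (rule integrable_continuous_real)
  have "integral {a..b} g \<le> integral {a..b} (\<lambda>_. m)"
    using int le by (intro integral_le) auto
  then have le_m: "integral {a..b} g \<le> (b - a) * m" using ab by simp
  have "integral {a..b} g \<noteq> (b - a) * m"
  proof
    assume eq: "integral {a..b} g = (b - a) * m"
    have "((\<lambda>x. m - g x) has_integral ((b - a) * m - integral {a..b} g)) {a..b}"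
      using has_integral_diff[OF has_integral_const_real[of m a b] integrable_integral[OF int]] ab
      by simp
    then have "((\<lambda>x. m - g x) has_integral 0) (cbox a b)" using eq by simp
    then have "m - g x0 = 0"
      by (rule has_integral_0_cbox_imp_0[rotated 2])
         (use cont le x0 ab in \<open>auto intro!: continuous_intros simp: box_real\<close>)
    then show False using x0 by simp
  qed
  then show ?thesis using le_m by linarith
qed

lemma last_maximum:
  fixes g :: "real \<Rightarrow> real"
  assumes cont: "continuous_on {a..b} g" and ab: "a \<le> b"
  obtains r0 where "r0 \<in> {a..b}" "\<And>y. y \<in> {a..b} \<Longrightarrow> g y \<le> g r0"
    "\<And>x. x \<in> {a..b} \<Longrightarrow> r0 < x \<Longrightarrow> g x < g r0"
proof -
  obtain x1 where x1: "x1 \<in> {a..b}" "\<And>y. y \<in> {a..b} \<Longrightarrow> g y \<le> g x1"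
    using continuous_attains_sup[OF compact_Icc _ cont] ab by fastforce
  define T where "T = {a..b} \<inter> g -` {g x1..}"
  have T: "closed T" "T \<noteq> {}" "bdd_above T"
    using continuous_closed_preimage[OF cont] x1 by (auto simp: T_def bdd_above_def)
  have "Sup T \<in> T" using closed_contains_Sup T by blast
  then have Sup: "Sup T \<in> {a..b}" "g (Sup T) = g x1"
    using x1 by (auto simp: T_def intro: antisym)
  show ?thesis
  proof (rule that[OF Sup(1)])
    show "g y \<le> g (Sup T)" if "y \<in> {a..b}" for y using x1(2)[OF that] Sup(2) by simp
    show "g x < g (Sup T)" if x: "x \<in> {a..b}" "Sup T < x" for x
    proof (rule ccontr)
      assume "\<not> g x < g (Sup T)"
      then have "x \<in> T" using x Sup(2) by (simp add: T_def)
      then show False using cSup_upper[OF _ T(3), of x] x(2) by simp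
    qed
  qed
qed

text \<open>If the maximum m of the circle integral on [0, s] were
  attained last at some r0 < s, averaging over small circles centred on the circle of
  radius r0 would give 2 pi m < 2 pi m.\<close>

lemma circle_integral_mono:
  assumes cont: "continuous_on (ball 0 1) u" and sub: "disc_submean u"
    and rs: "0 \<le> r" "r \<le> s" "s < 1"
  shows "circle_integral u r \<le> circle_integral u s"
proof -
  have M_cont: "continuous_on {0..s} (circle_integral u)"
    using circle_integral_continuous[OF cont rs(3)] .
  obtain r0 where r0: "r0 \<in> {0..s}"
    and max: "\<And>y. y \<in> {0..s} \<Longrightarrow> circle_integral u y \<le> circle_integral u r0"
    and beyond: "\<And>x. x \<in> {0..s} \<Longrightarrow> r0 < x \<Longrightarrow> circle_integral u x < circle_integral u r0"
    using last_maximum[OF M_cont] rs by auto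
  define m where "m = circle_integral u r0"
  show ?thesis
  proof (cases "r0 = s")
    case True
    then show ?thesis using max[of r] rs by simp
  next
    case False
    obtain \<delta> where \<delta>: "\<delta> > 0" "\<And>z c. cmod z \<le> s \<Longrightarrow> cmod c < \<delta> \<Longrightarrow>
               2 * pi * u z \<le> integral {-pi..pi} (\<lambda>\<sigma>. u (z + c * cis \<sigma>))"
      using sub rs(3) unfolding disc_submean_def by blast
    define \<rho> where "\<rho> = min (\<delta>/2) (s - r0)"
    have \<rho>: "\<rho> > 0" "\<rho> < \<delta>" "r0 + \<rho> \<le> s" using \<delta> r0 False by (auto simp: \<rho>_def)
    define h where "h \<sigma> = circle_integral u (cmod (of_real r0 + of_real \<rho> * cis \<sigma>))" for \<sigma>
    have radius: "cmod (of_real r0 + of_real \<rho> * cis \<sigma>) \<in> {0..s}" for \<sigma>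
      using norm_triangle_ineq[of "of_real r0" "of_real \<rho> * cis \<sigma> :: complex"] r0 \<rho>
      by (simp add: norm_mult)
    have "2 * pi * m \<le> integral {-pi..pi} h"
      using circle_integral_le_shifted[OF cont \<delta>(2) _ \<rho> rs(3)] r0 by (simp add: h_def[abs_def] m_def)
    moreover have "integral {-pi..pi} h < (pi - - pi) * m"
    proof (rule integral_less_const)
      show "continuous_on {-pi..pi} h" unfolding h_def
        by (rule continuous_on_compose2[OF M_cont]) (use radius in \<open>auto intro!: continuous_intros\<close>)
      show "h \<sigma> \<le> m" for \<sigma> using max[OF radius[of \<sigma>]] by (simp add: h_def m_def)
      have "cmod (of_real r0 + of_real \<rho> * cis 0) = r0 + \<rho>" using r0 \<rho>
        by (simp del: of_real_add add: of_real_add[symmetric])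
      then show "h 0 < m" using beyond[of "r0 + \<rho>"] \<rho> r0 by (simp add: h_def m_def)
    qed auto
    ultimately show ?thesis by simp
  qed
qed

section \<open>Subharmonicity of (|F|^2 + |G|^2)^{p/2}\<close>

text \<open>Cauchy's integral formula on the circle of radius rho about z, parametrised by
  the unit interval.\<close>

lemma mean_value_01:
  assumes hol: "\<psi> holomorphic_on ball z \<delta>" and \<rho>: "0 < \<rho>" "\<rho> < \<delta>"
  shows "((\<lambda>t. \<psi> (z + of_real \<rho> * cis (2 * pi * t))) has_integral \<psi> z) {0..1}"
proof -
  have "continuous_on (cball z \<rho>) \<psi>"
    using holomorphic_on_imp_continuous_on[OF hol] \<rho> by (auto intro: continuous_on_subset)
  moreover have "\<psi> holomorphic_on ball z \<rho>"
    by (rule holomorphic_on_subset[OF hol]) (use \<rho> in auto)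
  ultimately
  have "((\<lambda>w. \<psi> w / (w - z)) has_contour_integral (2 * of_real pi * \<i> * \<psi> z)) (circlepath z \<rho>)"
    using \<rho> by (intro Cauchy_integral_circlepath) simp_all
  then have H: "((\<lambda>x. \<psi> (circlepath z \<rho> x) / (circlepath z \<rho> x - z)
                       * vector_derivative (circlepath z \<rho>) (at x within {0..1}))
                   has_integral (2 * of_real pi * \<i> * \<psi> z)) {0..1}"
    by (simp add: has_contour_integral_def)
  have "\<psi> (circlepath z \<rho> x) / (circlepath z \<rho> x - z) * vector_derivative (circlepath z \<rho>) (at x within {0..1})
      = (2 * of_real pi * \<i>) * \<psi> (z + of_real \<rho> * cis (2 * pi * x))" if "x \<in> {0..1}" for x
  proof -
    have e: "exp (2 * of_real pi * \<i> * of_real x) = cis (2 * pi * x)"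
      by (simp add: cis_conv_exp mult.commute mult.left_commute)
    have vd: "vector_derivative (circlepath z \<rho>) (at x within {0..1})
                = 2 * pi * \<i> * \<rho> * exp (2 * of_real pi * \<i> * x)"
      using that by (simp add: vector_derivative_circlepath01)
    have cp: "circlepath z \<rho> x = z + \<rho> * exp (2 * of_real pi * \<i> * x)"
      by (simp add: circlepath)
    show ?thesis unfolding vd cp e using \<rho> by (simp add: field_simps)
  qed
  then have "((\<lambda>x. (2 * of_real pi * \<i>) * \<psi> (z + of_real \<rho> * cis (2 * pi * x)))
               has_integral (2 * of_real pi * \<i> * \<psi> z)) {0..1}"
    using H by (subst (asm) has_integral_cong) simp_all
  from has_integral_mult_right[OF this, of "1 / (2 * of_real pi * \<i>)"] show ?thesis by simp
qed

lemma mean_value_Re: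
  assumes hol: "\<psi> holomorphic_on ball z \<delta>" and c: "cmod c < \<delta>"
  shows "integral {-pi..pi} (\<lambda>\<sigma>. Re (\<psi> (z + c * cis \<sigma>))) = 2 * pi * Re (\<psi> z)"
proof (cases "c = 0")
  case True then show ?thesis by simp
next
  case False
  define \<rho> where "\<rho> = cmod c"
  have \<rho>: "0 < \<rho>" "\<rho> < \<delta>" using False c by (auto simp: \<rho>_def)
  define h where "h \<sigma> = Re (\<psi> (z + of_real \<rho> * cis \<sigma>))" for \<sigma>
  have h_cont: "continuous_on UNIV h"
    unfolding h_def
    by (intro continuous_intros continuous_on_compose2[OF holomorphic_on_imp_continuous_on[OF hol]])
       (use \<rho> in \<open>auto intro!: continuous_intros simp: dist_norm norm_mult\<close>)
  have h_per: "h (x + 2 * pi) = h x" for x by (simp add: h_def cis_periodic)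
  have "\<bar>Arg c\<bar> \<le> 2 * pi" "\<bar>pi\<bar> \<le> 2 * pi" using Arg_bounded[of c] by auto
  note shift = periodic_integral_shift[OF h_cont h_per this(1)] periodic_integral_shift[OF h_cont h_per this(2)]
  have "integral {-pi..pi} (\<lambda>\<sigma>. Re (\<psi> (z + c * cis \<sigma>))) = integral {-pi..pi} (\<lambda>\<sigma>. h (\<sigma> + Arg c))"
    using rcis_cmod_Arg[of c]
    by (intro integral_cong) (simp add: h_def \<rho>_def rcis_def cis_mult[symmetric] mult_ac add.commute)
  also have "\<dots> = integral {-pi..pi} (\<lambda>\<sigma>. h (\<sigma> + pi))" using shift by simp
  also have "\<dots> = integral {0..2*pi} h"
    using integral_shift_Icc_real[of "-pi" pi h pi] by (simp add: o_def add.commute)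
  also have "\<dots> = 2 * pi * Re (\<psi> z)"
  proof -
    have int: "h integrable_on {0..2*pi}"
      using h_cont by (intro integrable_continuous_real) (auto intro: continuous_on_subset)
    have "(\<lambda>x. x / (2*pi)) ` {0..2*pi} = (\<lambda>x. (1/(2*pi)) * x + 0) ` {0..2*pi}" by simp
    also have "\<dots> = {0..1}" by (subst image_affinity_atLeastAtMost) auto
    finally have A: "((\<lambda>x. h ((2*pi) * x)) has_integral (1 / (2*pi)) * integral {0..2*pi} h) {0..1}"
      using has_integral_stretch_real[OF integrable_integral[OF int], of "2*pi"] by simp
    have B: "((\<lambda>x. h ((2*pi) * x)) has_integral Re (\<psi> z)) {0..1}"
      using has_integral_linear[OF mean_value_01[OF hol \<rho>] bounded_linear_Re]
      by (simp add: o_def h_def)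
    from has_integral_unique[OF A B] show ?thesis by (simp add: field_simps)
  qed
  finally show ?thesis .
qed

lemma submean_of_holomorphic_minorant:
  assumes hol: "\<psi> holomorphic_on ball z \<delta>" and cont: "continuous_on (ball z \<delta>) u"
    and below: "\<And>w. w \<in> ball z \<delta> \<Longrightarrow> Re (\<psi> w) \<le> u w" and centre: "Re (\<psi> z) = u z"
    and c: "cmod c < \<delta>"
  shows "2 * pi * u z \<le> integral {-pi..pi} (\<lambda>\<sigma>. u (z + c * cis \<sigma>))"
proof -
  have on_ball: "z + c * cis \<sigma> \<in> ball z \<delta>" for \<sigma> using c by (simp add: dist_norm norm_mult)
  have "continuous_on {-pi..pi} (\<lambda>\<sigma>. Re (\<psi> (z + c * cis \<sigma>)))"
       "continuous_on {-pi..pi} (\<lambda>\<sigma>. u (z + c * cis \<sigma>))"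
    by (intro continuous_intros continuous_on_compose2[OF holomorphic_on_imp_continuous_on[OF hol]]
              continuous_on_compose2[OF cont]; use on_ball in auto)+
  then have "integral {-pi..pi} (\<lambda>\<sigma>. Re (\<psi> (z + c * cis \<sigma>)))
               \<le> integral {-pi..pi} (\<lambda>\<sigma>. u (z + c * cis \<sigma>))"
    using below on_ball by (intro integral_le integrable_continuous_real) auto
  then show ?thesis using mean_value_Re[OF hol c] centre by simp
qed

text \<open>pair_powr p eps F G z = (|F z|^2 + |G z|^2 + eps)^{p/2}, the p-th power of the norm
  of (F z, G z, sqrt eps).\<close>

definition pair_powr :: "real \<Rightarrow> real \<Rightarrow> (complex \<Rightarrow> complex) \<Rightarrow> (complex \<Rightarrow> complex) \<Rightarrow> complex \<Rightarrow> real"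
  where "pair_powr p \<epsilon> F G z = ((cmod (F z))^2 + (cmod (G z))^2 + \<epsilon>) powr (p / 2)"

lemma pair_powr_nonneg: "0 \<le> pair_powr p \<epsilon> F G z"
  by (simp add: pair_powr_def)

lemma pair_powr_continuous:
  assumes "continuous_on S F" "continuous_on S G" "0 \<le> \<epsilon>" "0 < p"
  shows "continuous_on S (pair_powr p \<epsilon> F G)"
  unfolding pair_powr_def[abs_def]
  by (rule continuous_on_powr') (use assms in \<open>auto intro!: continuous_intros add_nonneg_nonneg\<close>)

lemma pair_powr_on_circle_continuous:
  assumes "continuous_on (ball 0 1) F" "continuous_on (ball 0 1) G" "0 \<le> \<epsilon>" "0 < p"
    and r: "0 \<le> r" "r < 1"
  shows "continuous_on S (\<lambda>t. pair_powr p \<epsilon> F G (of_real r * cis t))"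
  using r by (intro continuous_on_compose2[OF pair_powr_continuous[OF assms(1-4)]])
             (auto intro!: continuous_intros simp: norm_mult)

lemma cauchy_schwarz3:
  fixes a1 a2 a3 b1 b2 b3 :: real
  shows "a1*b1 + a2*b2 + a3*b3 \<le> sqrt (a1^2 + a2^2 + a3^2) * sqrt (b1^2 + b2^2 + b3^2)"
proof -
  have "(a1^2+a2^2+a3^2)*(b1^2+b2^2+b3^2) - (a1*b1+a2*b2+a3*b3)^2
          = (a1*b2-a2*b1)^2 + (a1*b3-a3*b1)^2 + (a2*b3-a3*b2)^2"
    by (simp add: power2_eq_square algebra_simps)
  then have "(a1*b1+a2*b2+a3*b3)^2 \<le> (a1^2+a2^2+a3^2)*(b1^2+b2^2+b3^2)"
    by (smt (verit) zero_le_power2)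
  then show ?thesis by (metis real_le_rsqrt real_sqrt_mult)
qed

lemma linear_form_bound:
  fixes a b x y :: complex
  assumes "e \<ge> 0" "e' \<ge> 0"
  shows "cmod (cnj a * x + cnj b * y + of_real (e * e'))
           \<le> sqrt ((cmod a)^2 + (cmod b)^2 + e^2) * sqrt ((cmod x)^2 + (cmod y)^2 + e'^2)"
proof -
  have "cmod (cnj a * x + cnj b * y + of_real (e * e')) \<le> cmod (cnj a * x) + cmod (cnj b * y) + cmod (of_real (e * e') :: complex)"
    by (meson norm_triangle_ineq order_trans add_right_mono)
  also have "\<dots> = cmod a * cmod x + cmod b * cmod y + e * e'"
    using assms by (simp add: norm_mult)
  also have "\<dots> \<le> sqrt ((cmod a)^2 + (cmod b)^2 + e^2) * sqrt ((cmod x)^2 + (cmod y)^2 + e'^2)"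
    by (rule cauchy_schwarz3)
  finally show ?thesis .
qed

lemma affine_form_estimates:
  fixes A B X Y :: complex
  assumes \<epsilon>: "\<epsilon> > 0"
  defines "N \<equiv> sqrt ((cmod A)^2 + (cmod B)^2 + \<epsilon>)"
  shows "(cnj A * A + cnj B * B + of_real \<epsilon>) / of_real N = of_real N"
    and "cmod ((cnj A * X + cnj B * Y + of_real \<epsilon>) / of_real N - of_real N) \<le> dist (X, Y) (A, B)"
    and "cmod ((cnj A * X + cnj B * Y + of_real \<epsilon>) / of_real N) \<le> sqrt ((cmod X)^2 + (cmod Y)^2 + \<epsilon>)"
proof -
  have N2: "N^2 = (cmod A)^2 + (cmod B)^2 + \<epsilon>" and N: "N > 0"
    using \<epsilon> by (simp_all add: N_def add_nonneg_nonneg add_nonneg_pos)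
  have "cnj A * A = of_real ((cmod A)^2)" "cnj B * B = of_real ((cmod B)^2)"
    by (simp_all only: complex_norm_square mult.commute)
  then have "cnj A * A + cnj B * B + of_real \<epsilon> = of_real (N^2)"
    unfolding N2 by simp
  then show at_centre: "(cnj A * A + cnj B * B + of_real \<epsilon>) / of_real N = of_real N"
    using N by (simp add: power2_eq_square)
  have "cmod (cnj A * (X - A) + cnj B * (Y - B) + of_real (0 * 0))
          \<le> sqrt ((cmod A)^2 + (cmod B)^2 + 0^2) * sqrt ((cmod (X - A))^2 + (cmod (Y - B))^2 + 0^2)"
    by (rule linear_form_bound) simp_all
  also have "\<dots> \<le> N * dist (X, Y) (A, B)"
    unfolding N_def using \<epsilon>
    by (intro mult_mono real_sqrt_le_mono) (simp_all add: dist_norm norm_Pair)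
  finally show "cmod ((cnj A * X + cnj B * Y + of_real \<epsilon>) / of_real N - of_real N) \<le> dist (X, Y) (A, B)"
    using N at_centre[symmetric] by (simp add: norm_divide divide_le_eq field_simps mult.commute)
  have "cmod (cnj A * X + cnj B * Y + of_real (sqrt \<epsilon> * sqrt \<epsilon>))
          \<le> N * sqrt ((cmod X)^2 + (cmod Y)^2 + (sqrt \<epsilon>)^2)"
    using linear_form_bound[of "sqrt \<epsilon>" "sqrt \<epsilon>" A X B Y] \<epsilon> by (simp add: N_def)
  then show "cmod ((cnj A * X + cnj B * Y + of_real \<epsilon>) / of_real N) \<le> sqrt ((cmod X)^2 + (cmod Y)^2 + \<epsilon>)"
    using N \<epsilon> by (simp add: norm_divide field_simps)
qed

text \<open>Where (F, G) stays within sqrt eps of its value at z, the p-th power of the affine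
  form above composed with (F, G) is holomorphic (its values have positive real part)
  and is a minorant of (|F|^2 + |G|^2 + eps)^{p/2} touching it at z.\<close>

lemma holomorphic_minorant:
  assumes hF: "F holomorphic_on ball z \<delta>" and hG: "G holomorphic_on ball z \<delta>"
    and \<epsilon>: "\<epsilon> > 0" and p: "p > 0"
    and near: "\<And>w. w \<in> ball z \<delta> \<Longrightarrow> dist (F w, G w) (F z, G z) < sqrt \<epsilon>"
  shows "\<exists>\<psi>. \<psi> holomorphic_on ball z \<delta> \<and> (\<forall>w. Re (\<psi> w) \<le> pair_powr p \<epsilon> F G w)
             \<and> Re (\<psi> z) = pair_powr p \<epsilon> F G z"
proof -
  define N where "N = sqrt ((cmod (F z))^2 + (cmod (G z))^2 + \<epsilon>)"
  have N: "N > 0" "sqrt \<epsilon> \<le> N" using \<epsilon> by (simp_all add: N_def add_nonneg_pos)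
  define \<phi> where "\<phi> w = (cnj (F z) * F w + cnj (G z) * G w + of_real \<epsilon>) / of_real N" for w
  note est = affine_form_estimates[OF \<epsilon>, where A="F z" and B="G z", folded N_def \<phi>_def]
  have Re_pos: "Re (\<phi> w) > 0" if "w \<in> ball z \<delta>" for w
  proof -
    have "cmod (\<phi> w - of_real N) \<le> dist (F w, G w) (F z, G z)"
      using est(2)[of "F w" "G w"] by (simp add: \<phi>_def)
    then have "cmod (\<phi> w - of_real N) < N" using near[OF that] N by linarith
    then show ?thesis using abs_Re_le_cmod[of "\<phi> w - of_real N"] by simp
  qed
  define \<psi> where "\<psi> w = \<phi> w powr of_real p" for w
  have hol_\<phi>: "\<phi> holomorphic_on ball z \<delta>"
    unfolding \<phi>_def using hF hG N by (intro holomorphic_intros) auto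
  have off_cut: "\<phi> w \<notin> \<real>\<^sub>\<le>\<^sub>0" if "w \<in> ball z \<delta>" for w
    using Re_pos[OF that] by (simp add: complex_nonpos_Reals_iff)
  have "\<psi> holomorphic_on ball z \<delta>"
    unfolding \<psi>_def by (rule holomorphic_on_powr[OF hol_\<phi> holomorphic_on_const off_cut])
  moreover have "Re (\<psi> w) \<le> pair_powr p \<epsilon> F G w" for w
  proof -
    have "Re (\<psi> w) \<le> cmod (\<phi> w) powr p"
      using complex_Re_le_cmod[of "\<psi> w"] by (simp add: \<psi>_def norm_powr_real_powr')
    also have "\<dots> \<le> sqrt ((cmod (F w))^2 + (cmod (G w))^2 + \<epsilon>) powr p"
    proof (rule powr_mono2)
      show "cmod (\<phi> w) \<le> sqrt ((cmod (F w))^2 + (cmod (G w))^2 + \<epsilon>)"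
        using est(3)[of "F w" "G w"] by (simp add: \<phi>_def)
    qed (use p in auto)
    also have "\<dots> = pair_powr p \<epsilon> F G w"
      using \<epsilon> by (simp add: pair_powr_def powr_half_sqrt[symmetric] add_nonneg_nonneg powr_powr)
    finally show ?thesis .
  qed
  moreover have "Re (\<psi> z) = pair_powr p \<epsilon> F G z"
  proof -
    have "\<psi> z = of_real (N powr p)"
      using est(1) N by (simp add: \<psi>_def \<phi>_def powr_of_real)
    moreover have "N powr p = pair_powr p \<epsilon> F G z"
      using \<epsilon> by (simp add: N_def pair_powr_def powr_half_sqrt[symmetric] add_nonneg_nonneg powr_powr)
    ultimately show ?thesis by simp
  qed
  ultimately show ?thesis by blast
qed

lemma uniform_disc_radius:
  fixes H :: "complex \<Rightarrow> 'a::metric_space"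
  assumes cont: "continuous_on (ball 0 1) H" and e: "e > 0" and s: "s < 1"
  obtains \<delta> where "\<delta> > 0"
    "\<And>z. cmod z \<le> s \<Longrightarrow> ball z \<delta> \<subseteq> ball 0 1"
    "\<And>z w. cmod z \<le> s \<Longrightarrow> w \<in> ball z \<delta> \<Longrightarrow> dist (H w) (H z) < e"
proof -
  define R where "R = (1 + max s 0) / 2"
  have R: "max s 0 < R" "cball 0 R \<subseteq> ball (0::complex) 1" using s by (auto simp: R_def)
  have "uniformly_continuous_on (cball 0 R) H"
    using continuous_on_subset[OF cont R(2)] by (rule compact_uniformly_continuous) simp
  then obtain \<delta>0 where \<delta>0: "\<delta>0 > 0"
    "\<And>x y. x \<in> cball 0 R \<Longrightarrow> y \<in> cball 0 R \<Longrightarrow> dist y x < \<delta>0 \<Longrightarrow> dist (H y) (H x) < e"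
    unfolding uniformly_continuous_on_def using e by blast
  define \<delta> where "\<delta> = min \<delta>0 (R - max s 0)"
  have in_R: "ball z \<delta> \<subseteq> cball 0 R" if z: "cmod z \<le> s" for z
  proof
    fix w assume "w \<in> ball z \<delta>"
    then have "cmod w < max s 0 + \<delta>"
      using z norm_triangle_ineq[of z "w - z"] by (simp add: dist_norm norm_minus_commute)
    then show "w \<in> cball 0 R" by (simp add: \<delta>_def)
  qed
  show ?thesis
  proof (rule that)
    show "\<delta> > 0" using \<delta>0 R by (simp add: \<delta>_def)
    show "ball z \<delta> \<subseteq> ball 0 1" if "cmod z \<le> s" for z using in_R[OF that] R(2) by blast
    fix z w assume z: "cmod z \<le> s" and w: "w \<in> ball z \<delta>"
    have "z \<in> cball 0 R" using in_R[OF z] \<open>\<delta> > 0\<close> centre_in_ball by blast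
    moreover have "dist w z < \<delta>0" using w by (simp add: \<delta>_def dist_commute)
    ultimately show "dist (H w) (H z) < e" using \<delta>0(2) in_R[OF z] w by blast
  qed
qed

text \<open>Hence (|F|^2 + |G|^2 + eps)^{p/2} has the sub-mean-value property: on the balls
  provided by the previous lemma the minorant of holomorphic_minorant exists.\<close>

lemma pair_powr_disc_submean:
  assumes hF: "F holomorphic_on ball 0 1" and hG: "G holomorphic_on ball 0 1"
    and \<epsilon>: "\<epsilon> > 0" and p: "p > 0"
  shows "disc_submean (pair_powr p \<epsilon> F G)"
  unfolding disc_submean_def
proof (intro allI impI)
  fix s :: real assume s: "s < 1"
  have cont: "continuous_on (ball 0 1) F" "continuous_on (ball 0 1) G"
    using hF hG by (auto intro: holomorphic_on_imp_continuous_on)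
  then have cont_pair: "continuous_on (ball 0 1) (\<lambda>w. (F w, G w))" by (intro continuous_intros)
  obtain \<delta> where \<delta>: "\<delta> > 0" and in_disc: "\<And>z. cmod z \<le> s \<Longrightarrow> ball z \<delta> \<subseteq> ball 0 1"
    and near: "\<And>z w. cmod z \<le> s \<Longrightarrow> w \<in> ball z \<delta> \<Longrightarrow> dist (F w, G w) (F z, G z) < sqrt \<epsilon>"
    using uniform_disc_radius[OF cont_pair real_sqrt_gt_zero[OF \<epsilon>] s] by blast
  have cont_u: "continuous_on (ball 0 1) (pair_powr p \<epsilon> F G)"
    using pair_powr_continuous[OF cont(1) cont(2) _ p] \<epsilon> by simp
  show "\<exists>\<delta>>0. \<forall>z c. cmod z \<le> s \<longrightarrow> cmod c < \<delta> \<longrightarrow>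
          2 * pi * pair_powr p \<epsilon> F G z \<le> integral {-pi..pi} (\<lambda>\<sigma>. pair_powr p \<epsilon> F G (z + c * cis \<sigma>))"
  proof (intro exI[of _ \<delta>] conjI allI impI)
    fix z c assume z: "cmod z \<le> s" and c: "cmod c < \<delta>"
    obtain \<psi> where hol: "\<psi> holomorphic_on ball z \<delta>"
        and below: "\<forall>w. Re (\<psi> w) \<le> pair_powr p \<epsilon> F G w"
        and centre: "Re (\<psi> z) = pair_powr p \<epsilon> F G z"
      using holomorphic_minorant[OF holomorphic_on_subset[OF hF in_disc[OF z]]
                                    holomorphic_on_subset[OF hG in_disc[OF z]] \<epsilon> p near[OF z]] by blast
    have cont_ball: "continuous_on (ball z \<delta>) (pair_powr p \<epsilon> F G)"
      using cont_u in_disc[OF z] by (rule continuous_on_subset)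
    show "2 * pi * pair_powr p \<epsilon> F G z
            \<le> integral {-pi..pi} (\<lambda>\<sigma>. pair_powr p \<epsilon> F G (z + c * cis \<sigma>))"
      using submean_of_holomorphic_minorant[OF hol cont_ball below[rule_format] centre c] .
  qed (use \<delta> in simp)
qed

lemma circle_integral_pair_powr_limit:
  assumes cF: "continuous_on (ball 0 1) F" and cG: "continuous_on (ball 0 1) G"
    and p: "p > 0" and \<rho>: "0 \<le> \<rho>" "\<rho> < 1"
  shows "(\<lambda>k. circle_integral (pair_powr p (1 / Suc k) F G) \<rho>) \<longlonglongrightarrow> circle_integral (pair_powr p 0 F G) \<rho>"
proof -
  define g where "g k t = pair_powr p (1 / Suc k) F G (of_real \<rho> * cis t)" for k t
  have int: "g k integrable_on {-pi..pi}" for k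
    unfolding g_def using pair_powr_on_circle_continuous[OF cF cG _ p \<rho>]
    by (intro integrable_continuous_real) simp
  have dec: "g (Suc k) t \<le> g k t" for k t
    unfolding g_def pair_powr_def
    by (rule powr_mono2) (use p in \<open>auto simp: frac_le add_nonneg_nonneg\<close>)
  have lim: "(\<lambda>k. g k t) \<longlonglongrightarrow> pair_powr p 0 F G (of_real \<rho> * cis t)" for t
  proof -
    have "(\<lambda>k. 1 / real (Suc k)) \<longlonglongrightarrow> 0" by (rule LIMSEQ_Suc[OF lim_inverse_n'])
    then show ?thesis
      unfolding g_def pair_powr_def
      by (intro tendsto_powr2[OF _ tendsto_const] tendsto_intros) (use p in auto)
  qed
  have "\<bar>integral {-pi..pi} (g k)\<bar> \<le> integral {-pi..pi} (g 0)" for k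
  proof -
    have "g k t \<le> g 0 t" for t by (induction k) (auto intro: order_trans[OF dec])
    then have "integral {-pi..pi} (g k) \<le> integral {-pi..pi} (g 0)"
      by (intro integral_le int) auto
    moreover have "0 \<le> integral {-pi..pi} (g k)"
      by (rule integral_nonneg[OF int]) (simp add: g_def pair_powr_nonneg)
    ultimately show ?thesis by simp
  qed
  then have "bounded (range (\<lambda>k. integral {-pi..pi} (g k)))"
    by (intro boundedI[where B="integral {-pi..pi} (g 0)"]) auto
  from monotone_convergence_decreasing[OF int dec lim this]
  show ?thesis by (simp add: circle_integral_def g_def[abs_def])
qed

lemma circle_integral_pair_powr_mono:
  assumes hF: "F holomorphic_on ball 0 1" and hG: "G holomorphic_on ball 0 1"
    and p: "p > 0" and rs: "0 \<le> r" "r \<le> s" "s < 1"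
  shows "circle_integral (pair_powr p 0 F G) r \<le> circle_integral (pair_powr p 0 F G) s"
proof -
  have cont: "continuous_on (ball 0 1) F" "continuous_on (ball 0 1) G"
    using hF hG by (auto intro: holomorphic_on_imp_continuous_on)
  have "circle_integral (pair_powr p (1 / Suc k) F G) r \<le> circle_integral (pair_powr p (1 / Suc k) F G) s" for k
    by (rule circle_integral_mono[OF pair_powr_continuous[OF cont _ p]
                                     pair_powr_disc_submean[OF hF hG _ p] rs]) auto
  moreover have "(\<lambda>k. circle_integral (pair_powr p (1 / Suc k) F G) r) \<longlonglongrightarrow> circle_integral (pair_powr p 0 F G) r"
    "(\<lambda>k. circle_integral (pair_powr p (1 / Suc k) F G) s) \<longlonglongrightarrow> circle_integral (pair_powr p 0 F G) s"
    using circle_integral_pair_powr_limit[OF cont p] rs by auto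
  ultimately show ?thesis using LIMSEQ_le by blast
qed

lemma powr_sum_le:
  fixes A B X1 X2 q :: real
  assumes "0 \<le> A" "A \<le> X1" "0 \<le> B" "B \<le> X2" "q > 0"
  shows "(A + B) powr q \<le> 2 powr q * (X1 powr q + X2 powr q)"
proof -
  have "(A + B) powr q \<le> (2 * max X1 X2) powr q" using assms by (intro powr_mono2) auto
  also have "\<dots> = 2 powr q * max X1 X2 powr q" using assms by (simp add: powr_mult)
  also have "\<dots> \<le> 2 powr q * (X1 powr q + X2 powr q)"
    by (intro mult_left_mono) (auto simp: max_def)
  finally show ?thesis .
qed

text \<open>Reflecting F in the real axis changes the circle integrals of
  (|F|^2 + |G|^2)^{p/2} by at most the factor 2 * 2^{p/2}: the integrand for
  (conj o F o conj, G) at w is bounded by 2^{p/2} times the sum of the integrands for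
  (F, G) at conj w and at w, and circle integrals are invariant under reflection.\<close>

lemma circle_integral_reflect_le:
  assumes cF: "continuous_on (ball 0 1) F" and cG: "continuous_on (ball 0 1) G"
    and cFc: "continuous_on (ball 0 1) Fc"
    and Fc: "\<And>w. cmod w < 1 \<Longrightarrow> Fc w = cnj (F (cnj w))"
    and p: "p > 0" and r: "0 \<le> r" "r < 1"
  shows "circle_integral (pair_powr p 0 Fc G) r \<le> (2 * 2 powr (p/2)) * circle_integral (pair_powr p 0 F G) r"
proof -
  define U where "U t = pair_powr p 0 F G (of_real r * cis t)" for t
  define Uc where "Uc t = pair_powr p 0 Fc G (of_real r * cis t)" for t
  have cU: "continuous_on {-pi..pi} U" "continuous_on {-pi..pi} Uc"
    unfolding U_def[abs_def] Uc_def[abs_def]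
    using pair_powr_on_circle_continuous[OF _ cG _ p r] cF cFc by simp_all
  have cU': "continuous_on {-pi..pi} (\<lambda>t. U (-t))"
    by (rule continuous_on_compose2[OF cU(1)]) (auto intro!: continuous_intros)
  have pointwise: "Uc t \<le> 2 powr (p/2) * (U (-t) + U t)" for t
  proof -
    define w where "w = of_real r * cis t"
    have w: "cmod w < 1" using r by (simp add: w_def norm_mult)
    have cw: "cnj w = of_real r * cis (-t)" by (simp add: w_def cis_cnj)
    have "Uc t = ((cmod (F (cnj w)))^2 + (cmod (G w))^2) powr (p/2)"
      unfolding Uc_def pair_powr_def w_def[symmetric] Fc[OF w] by simp
    also have "\<dots> \<le> 2 powr (p/2) * (((cmod (F (cnj w)))^2 + (cmod (G (cnj w)))^2) powr (p/2)
                                     + ((cmod (F w))^2 + (cmod (G w))^2) powr (p/2))"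
      by (rule powr_sum_le) (use p in auto)
    also have "\<dots> = 2 powr (p/2) * (U (-t) + U t)"
      unfolding cw by (simp add: U_def pair_powr_def w_def)
    finally show ?thesis .
  qed
  have "circle_integral (pair_powr p 0 Fc G) r \<le> integral {-pi..pi} (\<lambda>t. 2 powr (p/2) * (U (-t) + U t))"
    unfolding circle_integral_def Uc_def[symmetric]
    using pointwise integrable_continuous_real[OF cU(2)]
    by (intro integral_le integrable_continuous_real continuous_intros cU cU') auto
  also have "\<dots> = 2 powr (p/2) * (integral {-pi..pi} (\<lambda>t. U (-t)) + integral {-pi..pi} U)"
    by (simp add: integral_add integrable_continuous_real[OF cU(1)] integrable_continuous_real[OF cU'])
  also have "integral {-pi..pi} (\<lambda>t. U (-t)) = integral {-pi..pi} U"
    using Henstock_Kurzweil_Integration.integral_reflect_real[of pi "-pi" U] by simp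
  finally show ?thesis by (simp add: circle_integral_def U_def[symmetric])
qed

section \<open>Integral means on a slice\<close>

lemma Mp_as_circle_integral:
  assumes cF: "continuous_on (ball 0 1) F" and cG: "continuous_on (ball 0 1) G"
    and p: "p > 0" and r: "0 \<le> r" "r < 1"
    and eq: "\<And>\<theta>. norm (g (r *\<^sub>R qexpI I \<theta>)) = norm (F (of_real r * cis \<theta>), G (of_real r * cis \<theta>))"
  shows "Mp p g I r = ((1 / (2 * pi)) * circle_integral (pair_powr p 0 F G) r) powr (1 / p)"
proof -
  have "norm (g (r *\<^sub>R qexpI I \<theta>)) powr p = pair_powr p 0 F G (of_real r * cis \<theta>)" for \<theta>
    by (simp add: eq norm_Pair pair_powr_def powr_half_sqrt[symmetric] powr_powr)
  then have "(LBINT \<theta>=-pi..pi. norm (g (r *\<^sub>R qexpI I \<theta>)) powr p)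
               = (LBINT \<theta>=-pi..pi. pair_powr p 0 F G (of_real r * cis \<theta>))"
    by simp
  also have "\<dots> = circle_integral (pair_powr p 0 F G) r"
    unfolding circle_integral_def
    using borel_integrable_atLeastAtMost'[OF pair_powr_on_circle_continuous[OF cF cG _ p r]]
    by (intro interval_integral_eq_integral) auto
  finally show ?thesis by (simp add: Mp_def)
qed

lemma slice_representation:
  assumes coeffs: "has_coeffs f a" and I: "I \<in> qS" and p: "p > 0"
  obtains F G Fc where
    "F holomorphic_on ball 0 1" "G holomorphic_on ball 0 1" "Fc holomorphic_on ball 0 1"
    "\<And>w. cmod w < 1 \<Longrightarrow> Fc w = cnj (F (cnj w))"
    "\<And>r. 0 \<le> r \<Longrightarrow> r < 1 \<Longrightarrow>
       Mp p f I r = ((1 / (2 * pi)) * circle_integral (pair_powr p 0 F G) r) powr (1 / p)"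
    "\<And>r. 0 \<le> r \<Longrightarrow> r < 1 \<Longrightarrow>
       Mp p (conj_series a) I r = ((1 / (2 * pi)) * circle_integral (pair_powr p 0 Fc G) r) powr (1 / p)"
proof -
  obtain u where u: "norm u = 1" "\<And>r \<theta>. r *\<^sub>R qexpI I \<theta> = qrot (qconj u) (of_real r * cis \<theta>, 0)"
    using slice_rotate_from_complex[OF I] by blast
  interpret S: slice_splitting f a u by unfold_locales (use coeffs u in auto)
  have on_slice: "r *\<^sub>R qexpI I \<theta> = S.slice_pt (of_real r * cis \<theta>)"
    and in_disc: "cmod (of_real r * cis \<theta>) < 1" if "0 \<le> r" "r < 1" for r \<theta>
    using that by (simp_all add: u(2) S.slice_pt_def norm_mult)
  have cont: "continuous_on (ball 0 1) S.F" "continuous_on (ball 0 1) S.G" "continuous_on (ball 0 1) S.Fc"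
    using S.holomorphic_F S.holomorphic_G S.holomorphic_Fc by (auto intro: holomorphic_on_imp_continuous_on)
  show ?thesis
  proof (rule that[OF S.holomorphic_F S.holomorphic_G S.holomorphic_Fc S.Fc_eq])
    show "Mp p f I r = ((1 / (2 * pi)) * circle_integral (pair_powr p 0 S.F S.G) r) powr (1 / p)"
      if "0 \<le> r" "r < 1" for r
      using that by (intro Mp_as_circle_integral[OF cont(1,2) p])
                    (simp_all add: on_slice S.norm_f_slice in_disc)
    show "Mp p (conj_series a) I r = ((1 / (2 * pi)) * circle_integral (pair_powr p 0 S.Fc S.G) r) powr (1 / p)"
      if "0 \<le> r" "r < 1" for r
      using that by (intro Mp_as_circle_integral[OF cont(3,2) p])
                    (simp_all add: on_slice S.norm_conj_series_slice in_disc)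
  qed
qed

lemma circle_integral_pair_powr_nonneg:
  assumes "continuous_on (ball 0 1) F" "continuous_on (ball 0 1) G" "p > 0" "0 \<le> r" "r < 1"
  shows "0 \<le> circle_integral (pair_powr p 0 F G) r"
  unfolding circle_integral_def
  using pair_powr_on_circle_continuous[OF assms(1,2) _ assms(3-5)]
  by (intro integral_nonneg integrable_continuous_real) (auto simp: pair_powr_nonneg)

lemma Mp_mono_of_representation:
  assumes hF: "F holomorphic_on ball 0 1" and hG: "G holomorphic_on ball 0 1" and p: "p > 0"
    and rep: "\<And>r. 0 \<le> r \<Longrightarrow> r < 1 \<Longrightarrow>
                Mp p g I r = ((1 / (2 * pi)) * circle_integral (pair_powr p 0 F G) r) powr (1 / p)"
    and xy: "0 \<le> x" "x \<le> y" "y < 1"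
  shows "Mp p g I x \<le> Mp p g I y"
proof -
  have "0 \<le> circle_integral (pair_powr p 0 F G) x"
    using hF hG xy p
    by (intro circle_integral_pair_powr_nonneg) (auto intro: holomorphic_on_imp_continuous_on)
  moreover have "circle_integral (pair_powr p 0 F G) x \<le> circle_integral (pair_powr p 0 F G) y"
    using circle_integral_pair_powr_mono[OF hF hG p xy] .
  ultimately show ?thesis
    using rep xy p by (simp add: powr_mono2 divide_right_mono)
qed

definition conj_constant :: "real \<Rightarrow> real" where
  "conj_constant p = (2 * 2 powr (p / 2)) powr (1 / p)"

lemma Mp_conj_series_le:
  assumes coeffs: "has_coeffs f a" and I: "I \<in> qS" and p: "p > 0" and r: "0 \<le> r" "r < 1"
  shows "Mp p (conj_series a) I r \<le> conj_constant p * Mp p f I r"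
proof -
  obtain F G Fc where hol: "F holomorphic_on ball 0 1" "G holomorphic_on ball 0 1" "Fc holomorphic_on ball 0 1"
    and Fc: "\<And>w. cmod w < 1 \<Longrightarrow> Fc w = cnj (F (cnj w))"
    and rep_f: "\<And>r. 0 \<le> r \<Longrightarrow> r < 1 \<Longrightarrow>
       Mp p f I r = ((1 / (2 * pi)) * circle_integral (pair_powr p 0 F G) r) powr (1 / p)"
    and rep_c: "\<And>r. 0 \<le> r \<Longrightarrow> r < 1 \<Longrightarrow>
       Mp p (conj_series a) I r = ((1 / (2 * pi)) * circle_integral (pair_powr p 0 Fc G) r) powr (1 / p)"
    using slice_representation[OF coeffs I p] by blast
  have cont: "continuous_on (ball 0 1) F" "continuous_on (ball 0 1) G" "continuous_on (ball 0 1) Fc"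
    using hol by (auto intro: holomorphic_on_imp_continuous_on)
  have "Mp p (conj_series a) I r = ((1 / (2 * pi)) * circle_integral (pair_powr p 0 Fc G) r) powr (1 / p)"
    using rep_c r .
  also have "\<dots> \<le> ((2 * 2 powr (p/2)) * ((1 / (2 * pi)) * circle_integral (pair_powr p 0 F G) r)) powr (1 / p)"
    using circle_integral_reflect_le[OF cont Fc p r]
          circle_integral_pair_powr_nonneg[OF cont(3,2) p r] p
    by (intro powr_mono2) (auto simp: field_simps)
  also have "\<dots> = conj_constant p * Mp p f I r"
    unfolding rep_f[OF r] conj_constant_def by (rule powr_mult)
  finally show ?thesis .
qed

lemma Lim_at_left_one_mono:
  fixes h :: "real \<Rightarrow> real"
  assumes mono: "\<And>x y. 0 < x \<Longrightarrow> x \<le> y \<Longrightarrow> y < 1 \<Longrightarrow> h x \<le> h y"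
  shows "Lim (at_left 1) (\<lambda>r. ereal (h r)) = (SUP r\<in>{0<..<1}. ereal (h r))"
proof (rule tendsto_Lim[OF trivial_limit_at_left_real], rule increasing_tendsto)
  show "\<forall>\<^sub>F r in at_left 1. ereal (h r) \<le> (SUP r\<in>{0<..<1}. ereal (h r))"
    by (rule eventually_at_leftI[of 0]) (auto intro: SUP_upper)
  fix x assume "x < (SUP r\<in>{0<..<1}. ereal (h r))"
  then obtain r0 where r0: "r0 \<in> {0<..<1}" "x < ereal (h r0)" by (auto simp: less_SUP_iff)
  show "\<forall>\<^sub>F r in at_left 1. x < ereal (h r)"
  proof (rule eventually_at_leftI[of r0])
    fix r assume "r \<in> {r0<..<1}"
    then have "h r0 \<le> h r" using r0 by (intro mono) auto
    then show "x < ereal (h r)" using r0 by (meson ereal_less_eq(3) less_le_trans)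
  qed (use r0 in auto)
qed

lemma slice_hardy_limit_conj_le:
  assumes coeffs: "has_coeffs f a" and I: "I \<in> qS" and p: "p > 0"
    and bound: "Lim (at_left (1::real)) (\<lambda>r. ereal (Mp p f I r)) \<le> ereal b"
  shows "Lim (at_left (1::real)) (\<lambda>r. ereal (Mp p (conj_series a) I r)) \<le> ereal (conj_constant p * b)"
proof -
  obtain F G Fc where hol: "F holomorphic_on ball 0 1" "G holomorphic_on ball 0 1" "Fc holomorphic_on ball 0 1"
    and rep_f: "\<And>r. 0 \<le> r \<Longrightarrow> r < 1 \<Longrightarrow>
       Mp p f I r = ((1 / (2 * pi)) * circle_integral (pair_powr p 0 F G) r) powr (1 / p)"
    and rep_c: "\<And>r. 0 \<le> r \<Longrightarrow> r < 1 \<Longrightarrow>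
       Mp p (conj_series a) I r = ((1 / (2 * pi)) * circle_integral (pair_powr p 0 Fc G) r) powr (1 / p)"
    using slice_representation[OF coeffs I p] by metis
  have lim_f: "Lim (at_left (1::real)) (\<lambda>r. ereal (Mp p f I r)) = (SUP r\<in>{0<..<1}. ereal (Mp p f I r))"
    by (rule Lim_at_left_one_mono) (rule Mp_mono_of_representation[OF hol(1,2) p rep_f]; simp)
  have lim_c: "Lim (at_left (1::real)) (\<lambda>r. ereal (Mp p (conj_series a) I r))
                 = (SUP r\<in>{0<..<1}. ereal (Mp p (conj_series a) I r))"
    by (rule Lim_at_left_one_mono) (rule Mp_mono_of_representation[OF hol(3,2) p rep_c]; simp)
  have "Mp p (conj_series a) I r \<le> conj_constant p * b" if r: "r \<in> {0<..<1}" for r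
  proof -
    have "ereal (Mp p f I r) \<le> Lim (at_left (1::real)) (\<lambda>r. ereal (Mp p f I r))"
      unfolding lim_f by (rule SUP_upper[OF r])
    from order_trans[OF this bound] have "Mp p f I r \<le> b" by simp
    then have "conj_constant p * Mp p f I r \<le> conj_constant p * b"
      by (simp add: conj_constant_def mult_left_mono)
    moreover have "Mp p (conj_series a) I r \<le> conj_constant p * Mp p f I r"
      using Mp_conj_series_le[OF coeffs I p] r by simp
    ultimately show ?thesis by linarith
  qed
  then show ?thesis unfolding lim_c by (intro SUP_least) auto
qed

section \<open>The regular conjugate\<close>

text \<open>The series defining f^c converges on the whole ball, since on each slice it is
  the rotated image of (Fc, -G).\<close>

lemma has_coeffs_conj_series:
  assumes coeffs: "has_coeffs f a"
  shows "has_coeffs (conj_series a) (\<lambda>n. qconj (a n))"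
  unfolding has_coeffs_def
proof
  fix q assume q: "q \<in> qB"
  obtain u w where uw: "norm u = 1" "q = qrot (qconj u) (w, 0)" "cmod w = norm q"
    using rotate_from_complex by blast
  interpret S: slice_splitting f a u by unfold_locales (use coeffs uw in auto)
  have "cmod w < 1" using q uw(3) by (simp add: qB_def)
  then have "summable (\<lambda>n. qmult (qpow q n) (qconj (a n)))"
    using S.conj_series_sums by (auto simp: S.slice_pt_def uw(2) sums_iff)
  then show "(\<lambda>n. qmult (qpow q n) (qconj (a n))) sums conj_series a q"
    by (simp add: conj_series_def summable_sums)
qed

text \<open>Sup-norm bound: |f^c(q)| \<le> |F(conj w)| + |G(w)| \<le> |f(conj w)| + |f(w)| on the slice
  through q.\<close>

lemma norm_conj_series_le:
  assumes coeffs: "has_coeffs f a" and bound: "\<And>q. q \<in> qB \<Longrightarrow> norm (f q) \<le> b"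
    and q: "q \<in> qB"
  shows "norm (conj_series a q) \<le> 2 * b"
proof -
  obtain u w where uw: "norm u = 1" "q = qrot (qconj u) (w, 0)" "cmod w = norm q"
    using rotate_from_complex by blast
  interpret S: slice_splitting f a u by unfold_locales (use coeffs uw in auto)
  have q_pt: "q = S.slice_pt w" by (simp add: S.slice_pt_def uw(2))
  have w: "cmod w < 1" "cmod (cnj w) < 1" using q uw(3) by (simp_all add: qB_def)
  have bound_pt: "norm (f (S.slice_pt v)) \<le> b" if "cmod v < 1" for v
    using bound that by (simp add: qB_def S.norm_slice_pt)
  have "norm (conj_series a q) = norm (S.Fc w, S.G w)"
    using S.norm_conj_series_slice[OF w(1)] by (simp add: q_pt)
  also have "\<dots> \<le> cmod (S.Fc w) + cmod (S.G w)"
    by (rule norm_Pair_le)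
  finally have "norm (conj_series a q) \<le> cmod (S.Fc w) + cmod (S.G w)" .
  moreover have "cmod (S.Fc w) \<le> b"
  proof -
    have "cmod (S.Fc w) = cmod (S.F (cnj w))" by (simp add: S.Fc_eq[OF w(1)])
    also have "\<dots> \<le> norm (f (S.slice_pt (cnj w)))"
      using S.norm_f_slice[OF w(2)] norm_fst_le[of "S.F (cnj w)" "S.G (cnj w)"] by simp
    finally show ?thesis using bound_pt[OF w(2)] by linarith
  qed
  moreover have "cmod (S.G w) \<le> b"
    using S.norm_f_slice[OF w(1)] norm_snd_le[of "S.G w" "S.F w"] bound_pt[OF w(1)] by simp
  ultimately show ?thesis by linarith
qed

lemma hardy_norm_infinity_finite_iff:
  "hardy_norm \<infinity> g < \<infinity> \<longleftrightarrow> (\<exists>b. \<forall>q\<in>qB. norm (g q) \<le> b)"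
proof
  assume "hardy_norm \<infinity> g < \<infinity>"
  then obtain b where "(SUP q\<in>qB. ereal (norm (g q))) \<le> ereal b"
    by (cases "hardy_norm \<infinity> g") (auto simp: hardy_norm_def)
  then show "\<exists>b. \<forall>q\<in>qB. norm (g q) \<le> b"
    by (meson SUP_le_iff ereal_less_eq(3))
next
  assume "\<exists>b. \<forall>q\<in>qB. norm (g q) \<le> b"
  then obtain b where "\<forall>q\<in>qB. norm (g q) \<le> b" by blast
  then have "(SUP q\<in>qB. ereal (norm (g q))) \<le> ereal b" by (intro SUP_least) auto
  then have "(SUP q\<in>qB. ereal (norm (g q))) < \<infinity>" by (rule le_less_trans) simp
  then show "hardy_norm \<infinity> g < \<infinity>" by (simp add: hardy_norm_def)
qed

lemma hardy_norm_conj_series_finite: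
  assumes coeffs: "has_coeffs f a" and p: "0 < p" "p \<noteq> \<infinity>" and hf: "hardy_norm p f < \<infinity>"
  shows "hardy_norm p (conj_series a) < \<infinity>"
proof -
  define p' where "p' = real_of_ereal p"
  have p': "p' > 0" using p by (cases p) (auto simp: p'_def)
  obtain b where b: "(SUP I\<in>qS. Lim (at_left (1::real)) (\<lambda>r. ereal (Mp p' f I r))) \<le> ereal b"
    using hf p by (cases "hardy_norm p f") (auto simp: hardy_norm_def p'_def)
  have "Lim (at_left (1::real)) (\<lambda>r. ereal (Mp p' (conj_series a) I r)) \<le> ereal (conj_constant p' * b)"
    if I: "I \<in> qS" for I
    using slice_hardy_limit_conj_le[OF coeffs I p'] order_trans[OF SUP_upper[OF I] b] by blast
  then have "(SUP I\<in>qS. Lim (at_left (1::real)) (\<lambda>r. ereal (Mp p' (conj_series a) I r)))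
               \<le> ereal (conj_constant p' * b)"
    by (intro SUP_least) auto
  then have "(SUP I\<in>qS. Lim (at_left (1::real)) (\<lambda>r. ereal (Mp p' (conj_series a) I r))) < \<infinity>"
    by (rule le_less_trans) simp
  then show ?thesis using p by (simp add: hardy_norm_def p'_def)
qed

theorem mainTheorem4:
  fixes p :: ereal and f :: "quat \<Rightarrow> quat"
  assumes "0 < p"
    and "f \<in> hardy_space p"
  shows "regular_conj f \<in> hardy_space p"
proof -
  define a where "a = (SOME a. has_coeffs f a)"
  have "\<exists>a. has_coeffs f a" using assms(2) by (simp add: hardy_space_def slice_regular_def)
  then have coeffs: "has_coeffs f a" unfolding a_def by (rule someI_ex)
  have conj: "regular_conj f = conj_series a"
    by (simp add: regular_conj_def a_def conj_series_def[abs_def] Let_def)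
  have "slice_regular (conj_series a)"
    using has_coeffs_conj_series[OF coeffs] by (auto simp: slice_regular_def)
  moreover have "hardy_norm p (conj_series a) < \<infinity>"
  proof (cases "p = \<infinity>")
    case True
    then obtain b where "\<forall>q\<in>qB. norm (f q) \<le> b"
      using assms(2) hardy_norm_infinity_finite_iff by (auto simp: hardy_space_def)
    then show ?thesis
      using True norm_conj_series_le[OF coeffs] hardy_norm_infinity_finite_iff by blast
  next
    case False
    then show ?thesis
      using hardy_norm_conj_series_finite[OF coeffs assms(1)] assms(2) by (simp add: hardy_space_def)
  qed
  ultimately show ?thesis by (simp add: conj hardy_space_def)
qed

end
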